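(* In the staggered-adoption setting described in the context, suppose: (i) $\{Y_{it}(a,e),E_i,A_{it}\}_{t=1}^T$ are i.i.d. across $i$ for $(a,e)\in\{0,1\}\times\{1,\dots,T,\infty\}$; (ii) $Y_{it}(0,e)=Y_{it}(0,e')$ for $t<\min\{e,e'\}$; (iii) for all $t_1\ne t_2$ and all $e$, $\mathbb{E}[g(Y_{it_1}(0,\infty))-g(Y_{it_2}(0,\infty))\mid E_i=e]=\mathbb{E}[g(Y_{it_1}(0,\infty))-g(Y_{it_2}(0,\infty))\mid E_i=\infty]$; (iv) $0\le h(e,s)\le\pi(e,s)$; (v) $|\tau_g(e,s)|\le|\mu_g(e,t)|$. Fix a finite treatment date $e$, a post-treatment period $t\ge e$ and a chosen period $s<e$. Then $\mu_g(e,t)$ is partially identified via \[\mu_g(e,t)\in m_g(e,s,t)\left[\min\left\{1,\frac{1}{1-\operatorname{sgn}(\tau_g(e,s)\mu_g(e,t))\pi(e,s)}\right\},\ \max\left\{1,\frac{1}{1-\operatorname{sgn}(\tau_g(e,s)\mu_g(e,t))\pi(e,s)}\right\}\right],\] i.e. $\mu_g(e,t)=m_g(e,s,t)\,c$ for some $c$ in the displayed interval, where $m_g(e,s,t)=\mathbb{E}[g(Y_{it})-g(Y_{is})\mid E_i=e]-\mathbb{E}[g(Y_{it})-g(Y_{is})\mid E_i=\infty]$.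
   Context: Periods $t\in\{1,\dots,T\}$, units $i=1,\dots,n$. $E_i\in\{1,\dots,T,\infty\}$ is the date at which unit $i$ is first treated (staggered adoption: once treated, always treated), with $E_i=\infty$ meaning never treated. $A_{it}\in\{0,1\}$ is the unobserved anticipation status of unit $i$ in period $t$. Potential outcomes $Y_{it}(a,e)$; anticipation only matters before treatment of eventually-treated units, i.e. $Y_{it}(1,e)=Y_{it}(0,e)$ whenever $t\ge e$ or $e=\infty$. Observed outcome $Y_{it}=Y_{it}(A_{it},E_i)$. $g$ is a known measurable real function with finite expectations. Define $\mu_g(e,t)=\mathbb{E}[g(Y_{it}(0,e))-g(Y_{it}(0,\infty))\mid E_i=e]$, $h(e,s)=\mathbb{P}[A_{is}=1\mid E_i=e]$, and the anticipatory effect $\tau_g(e,s)=\mathbb{E}[g(Y_{is}(1,e))-g(Y_{is}(0,e))\mid E_i=e,A_{is}=1]$. $\pi(e,s)\in(0,1)$ is a given bound. $\operatorname{sgn}$ is the sign function. *)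

theory Defs
  imports "HOL-Probability.Probability" "HOL-Library.Extended_Nat"
begin

text \<open>Treatment dates take values in {1..T} \<union> {\<infinity>}; we use enat, with \<infinity> = never treated.
  Anticipation status a \<in> {0,1} is rendered as bool (False = 0, True = 1).
  Potential outcomes: Y i t a e \<omega> = Y_it(a,e) at sample point \<omega>.\<close>

definition Edom :: "nat \<Rightarrow> enat set" where
  "Edom T = enat ` {1..T} \<union> {\<infinity>}"

definition cexp :: "'w measure \<Rightarrow> ('w \<Rightarrow> real) \<Rightarrow> 'w set \<Rightarrow> real" where
  "cexp M X P = (\<integral>\<omega>. X \<omega> * indicator P \<omega> \<partial>M) / measure M P"

definition obsY :: "(nat \<Rightarrow> nat \<Rightarrow> bool \<Rightarrow> enat \<Rightarrow> 'w \<Rightarrow> real) \<Rightarrow> (nat \<Rightarrow> 'w \<Rightarrow> enat)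
    \<Rightarrow> (nat \<Rightarrow> nat \<Rightarrow> 'w \<Rightarrow> bool) \<Rightarrow> nat \<Rightarrow> nat \<Rightarrow> 'w \<Rightarrow> real" where
  "obsY Y E A i t \<omega> = Y i t (A i t \<omega>) (E i \<omega>) \<omega>"

definition evE :: "'w measure \<Rightarrow> (nat \<Rightarrow> 'w \<Rightarrow> enat) \<Rightarrow> nat \<Rightarrow> enat \<Rightarrow> 'w set" where
  "evE M E i e = {\<omega> \<in> space M. E i \<omega> = e}"

definition mu_g where
  "mu_g M g Y E i e t =
     cexp M (\<lambda>\<omega>. g (Y i t False e \<omega>) - g (Y i t False \<infinity> \<omega>)) (evE M E i e)"

definition h_ant where
  "h_ant M E A i e s =
     measure M {\<omega> \<in> space M. A i s \<omega> \<and> E i \<omega> = e} / measure M (evE M E i e)"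

definition tau_g where
  "tau_g M g Y E A i e s =
     cexp M (\<lambda>\<omega>. g (Y i s True e \<omega>) - g (Y i s False e \<omega>))
       {\<omega> \<in> space M. E i \<omega> = e \<and> A i s \<omega>}"

definition m_g where
  "m_g M g Y E A i e s t =
     cexp M (\<lambda>\<omega>. g (obsY Y E A i t \<omega>) - g (obsY Y E A i s \<omega>)) (evE M E i e)
   - cexp M (\<lambda>\<omega>. g (obsY Y E A i t \<omega>) - g (obsY Y E A i s \<omega>)) (evE M E i \<infinity>)"

text \<open>The per-unit data {Y_it(a,e), E_i, A_it}_{t=1..T}, (a,e) \<in> {0,1} \<times> ({1..T} \<union> {\<infinity>}),
  as one random element, and the measurable space it lives in.\<close>
definition unit_data where
  "unit_data T Y E A i \<omega> =
     (restrict (\<lambda>(t, a, e). Y i t a e \<omega>) ({1..T} \<times> UNIV \<times> Edom T),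
      E i \<omega>,
      restrict (\<lambda>t. A i t \<omega>) {1..T})"

definition unit_space :: "nat \<Rightarrow> ((nat \<times> bool \<times> enat \<Rightarrow> real) \<times> enat \<times> (nat \<Rightarrow> bool)) measure" where
  "unit_space T =
     (\<Pi>\<^sub>M _ \<in> {1..T} \<times> UNIV \<times> Edom T. borel) \<Otimes>\<^sub>M
       (count_space UNIV \<Otimes>\<^sub>M (\<Pi>\<^sub>M _ \<in> {1..T}. count_space UNIV))"

end

theory Submission
  imports Defs
begin

text \<open>On the cohort \<open>E\<^sub>i = e\<close> the observed change from period \<open>s\<close> to period \<open>t \<ge> e\<close> is the
  treatment effect \<open>g(Y\<^sub>i\<^sub>t(0,e)) - g(Y\<^sub>i\<^sub>t(0,\<infinity>))\<close>, plus the untreated trend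
  \<open>g(Y\<^sub>i\<^sub>t(0,\<infinity>)) - g(Y\<^sub>i\<^sub>s(0,\<infinity>))\<close>, minus the anticipatory effect at \<open>s\<close> on those units that
  anticipate. Parallel trends cancels the untreated trend against the never-treated cohort,
  whence \<open>m\<^sub>g(e,s,t) = \<mu>\<^sub>g(e,t) - h(e,s) \<tau>\<^sub>g(e,s)\<close>. Writing \<open>\<tau>\<^sub>g = r \<mu>\<^sub>g\<close> with \<open>|r| \<le> 1\<close>,
  the ratio \<open>\<mu>\<^sub>g / m\<^sub>g = 1 / (1 - h r)\<close> lies between \<open>1\<close> and \<open>1 / (1 - sgn(r) \<pi>)\<close>.
  Only population moments of the single unit \<open>i\<close> enter.\<close>

lemma cexp_cong:
  assumes "\<And>\<omega>. \<omega> \<in> P \<Longrightarrow> X \<omega> = X' \<omega>"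
  shows "cexp M X P = cexp M X' P"
proof -
  have "(\<lambda>\<omega>. X \<omega> * indicator P \<omega>) = (\<lambda>\<omega>. X' \<omega> * indicator P \<omega>)"
    using assms by (auto split: split_indicator)
  then show ?thesis
    unfolding cexp_def by simp
qed

lemma cexp_add:
  assumes "integrable M X" "integrable M X'" "P \<in> sets M"
  shows "cexp M (\<lambda>\<omega>. X \<omega> + X' \<omega>) P = cexp M X P + cexp M X' P"
  using integrable_real_mult_indicator[OF assms(3,1)] integrable_real_mult_indicator[OF assms(3,2)]
  unfolding cexp_def by (simp add: distrib_right add_divide_distrib)

lemma cexp_diff:
  assumes "integrable M X" "integrable M X'" "P \<in> sets M"
  shows "cexp M (\<lambda>\<omega>. X \<omega> - X' \<omega>) P = cexp M X P - cexp M X' P"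
  using integrable_real_mult_indicator[OF assms(3,1)] integrable_real_mult_indicator[OF assms(3,2)]
  unfolding cexp_def by (simp add: left_diff_distrib diff_divide_distrib)

lemma (in finite_measure) cexp_mult_indicator:
  assumes "A \<in> sets M" "P \<in> sets M"
  shows "cexp M (\<lambda>\<omega>. X \<omega> * indicator A \<omega>) P
           = cexp M X (P \<inter> A) * (measure M (P \<inter> A) / measure M P)"
proof (cases "measure M (P \<inter> A) = 0")
  case True
  have "P \<inter> A \<in> null_sets M"
    using True assms by (simp add: null_sets_def emeasure_eq_measure)
  then have "AE \<omega> in M. X \<omega> * indicator A \<omega> * indicator P \<omega> = 0"
    by (rule AE_mp[OF AE_not_in]) (auto split: split_indicator)
  then have "(\<integral>\<omega>. X \<omega> * indicator A \<omega> * indicator P \<omega> \<partial>M) = 0"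
    by (rule integral_eq_zero_AE)
  then show ?thesis
    using True by (simp add: cexp_def)
next
  case False
  have "(\<lambda>\<omega>. X \<omega> * indicator A \<omega> * indicator P \<omega>) = (\<lambda>\<omega>. X \<omega> * indicator (P \<inter> A) \<omega>)"
    by (auto split: split_indicator)
  then show ?thesis
    using False by (simp add: cexp_def)
qed

lemma m_g_eq_mu_g_minus_h_ant_tau_g:
  fixes Y :: "nat \<Rightarrow> nat \<Rightarrow> bool \<Rightarrow> enat \<Rightarrow> 'w \<Rightarrow> real"
    and A :: "nat \<Rightarrow> nat \<Rightarrow> 'w \<Rightarrow> bool"
    and e :: enat
  assumes "prob_space M"
    and E_meas: "E i \<in> measurable M (count_space UNIV)"
    and A_meas: "A i s \<in> measurable M (count_space UNIV)"
    and g_int: "\<And>u a e'. u \<in> {s, t} \<Longrightarrow> e' \<in> {e, \<infinity>} \<Longrightarrow> integrable M (\<lambda>\<omega>. g (Y i u a e' \<omega>))"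
    and no_ant_never: "\<And>u a \<omega>. u \<in> {s, t} \<Longrightarrow> \<omega> \<in> space M \<Longrightarrow> Y i u a \<infinity> \<omega> = Y i u False \<infinity> \<omega>"
    and no_ant_after: "\<And>a \<omega>. \<omega> \<in> space M \<Longrightarrow> Y i t a e \<omega> = Y i t False e \<omega>"
    and no_ant_before: "\<And>\<omega>. \<omega> \<in> space M \<Longrightarrow> Y i s False e \<omega> = Y i s False \<infinity> \<omega>"
    and par_trend:
      "cexp M (\<lambda>\<omega>. g (Y i t False \<infinity> \<omega>) - g (Y i s False \<infinity> \<omega>)) (evE M E i e)
     = cexp M (\<lambda>\<omega>. g (Y i t False \<infinity> \<omega>) - g (Y i s False \<infinity> \<omega>)) (evE M E i \<infinity>)"
  shows "m_g M g Y E A i e s t = mu_g M g Y E i e t - h_ant M E A i e s * tau_g M g Y E A i e s"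
proof -
  interpret prob_space M by (rule assms(1))
  define X where "X = (\<lambda>\<omega>. g (obsY Y E A i t \<omega>) - g (obsY Y E A i s \<omega>))"
  define effect where "effect = (\<lambda>\<omega>. g (Y i t False e \<omega>) - g (Y i t False \<infinity> \<omega>))"
  define trend where "trend = (\<lambda>\<omega>. g (Y i t False \<infinity> \<omega>) - g (Y i s False \<infinity> \<omega>))"
  define anticipation where "anticipation = (\<lambda>\<omega>. g (Y i s True e \<omega>) - g (Y i s False e \<omega>))"
  define As where "As = {\<omega> \<in> space M. A i s \<omega>}"
  have As_sets: "As \<in> sets M"
    using measurable_sets[OF A_meas, of "{True}"] by (simp add: As_def vimage_def Int_def conj_commute)
  have evE_sets: "evE M E i e' \<in> sets M" for e'
    using measurable_sets[OF E_meas, of "{e'}"] by (simp add: evE_def vimage_def Int_def conj_commute)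
  have X_on_cohort: "X \<omega> = effect \<omega> + trend \<omega> - anticipation \<omega> * indicator As \<omega>"
    if "\<omega> \<in> evE M E i e" for \<omega>
    using that no_ant_after[of \<omega> "A i t \<omega>"] no_ant_before[of \<omega>]
    by (cases "A i s \<omega>")
       (auto simp: X_def effect_def trend_def anticipation_def obsY_def evE_def As_def)
  have X_on_never: "X \<omega> = trend \<omega>" if "\<omega> \<in> evE M E i \<infinity>" for \<omega>
    using that no_ant_never[of t \<omega> "A i t \<omega>"] no_ant_never[of s \<omega> "A i s \<omega>"]
    by (auto simp: X_def trend_def obsY_def evE_def)
  have int_effect: "integrable M effect" and int_trend: "integrable M trend"
    and int_anticipation: "integrable M anticipation"
    using g_int by (auto simp: effect_def trend_def anticipation_def)
  have cohort: "evE M E i e \<inter> As = {\<omega> \<in> space M. E i \<omega> = e \<and> A i s \<omega>}"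
    by (auto simp: evE_def As_def)
  have "cexp M X (evE M E i e) = cexp M effect (evE M E i e) + cexp M trend (evE M E i e)
      - cexp M (\<lambda>\<omega>. anticipation \<omega> * indicator As \<omega>) (evE M E i e)"
    using int_effect int_trend integrable_real_mult_indicator[OF As_sets int_anticipation] evE_sets
    by (simp add: cexp_cong[OF X_on_cohort] cexp_add cexp_diff)
  also have "\<dots> = mu_g M g Y E i e t + cexp M trend (evE M E i \<infinity>)
      - h_ant M E A i e s * tau_g M g Y E A i e s"
    using par_trend cexp_mult_indicator[OF As_sets evE_sets] cohort
    by (simp add: mu_g_def tau_g_def h_ant_def effect_def trend_def anticipation_def conj_commute)
  finally show ?thesis
    by (simp add: m_g_def cexp_cong[OF X_on_never] flip: X_def)
qed

lemma inverse_one_minus_mult_between_sgn_bounds: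
  fixes h p r :: real
  assumes "0 \<le> h" "h \<le> p" "p < 1" "\<bar>r\<bar> \<le> 1"
  shows "min 1 (1 / (1 - sgn r * p)) \<le> 1 / (1 - h * r)
       \<and> 1 / (1 - h * r) \<le> max 1 (1 / (1 - sgn r * p))"
proof -
  have "\<bar>h * r\<bar> \<le> p"
    using assms mult_mono[of h p "\<bar>r\<bar>" 1] by (simp add: abs_mult)
  then have hr: "- p \<le> h * r" "h * r \<le> p"
    by auto
  have pos: "0 < 1 - h * r"
    using hr(2) assms(3) by simp
  consider "r > 0" | "r = 0" | "r < 0"
    by linarith
  then show ?thesis
  proof cases
    case 1
    have "1 \<le> 1 / (1 - h * r)"
      using pos assms(1) 1 by simp
    moreover have "1 / (1 - h * r) \<le> 1 / (1 - p)"
      using pos hr(2) assms(3) by (intro divide_left_mono) auto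
    ultimately show ?thesis
      using 1 by simp
  next
    case 2
    then show ?thesis by simp
  next
    case 3
    have "1 / (1 - h * r) \<le> 1"
      using pos assms(1) 3 by (simp add: mult_nonneg_nonpos)
    moreover have "1 / (1 + p) \<le> 1 / (1 - h * r)"
      using pos hr(1) by (intro divide_left_mono) auto
    ultimately show ?thesis
      using 3 by simp
  qed
qed

lemma exists_scale_between_sgn_bounds:
  fixes \<mu> \<tau> h p :: real
  assumes "0 \<le> h" "h \<le> p" "p < 1" "\<bar>\<tau>\<bar> \<le> \<bar>\<mu>\<bar>"
  shows "\<exists>c. min 1 (1 / (1 - sgn (\<tau> * \<mu>) * p)) \<le> c
           \<and> c \<le> max 1 (1 / (1 - sgn (\<tau> * \<mu>) * p))
           \<and> \<mu> = (\<mu> - h * \<tau>) * c"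
proof (cases "\<mu> = 0")
  case True
  with assms(4) show ?thesis
    by (intro exI[of _ 1]) simp
next
  case False
  define r where "r = \<tau> / \<mu>"
  have "\<bar>r\<bar> \<le> 1"
    using False assms(4) by (simp add: r_def abs_divide divide_le_eq_1)
  have "\<tau> = r * \<mu>"
    using False by (simp add: r_def)
  then have "\<mu> - h * \<tau> = \<mu> * (1 - h * r)"
    by (simp add: algebra_simps)
  moreover have "0 < 1 - h * r"
    using \<open>\<bar>r\<bar> \<le> 1\<close> assms(1-3) mult_mono[of h p "\<bar>r\<bar>" 1] abs_ge_self[of "h * r"]
    by (simp add: abs_mult)
  ultimately show ?thesis
    using False inverse_one_minus_mult_between_sgn_bounds[OF assms(1-3) \<open>\<bar>r\<bar> \<le> 1\<close>]
    by (intro exI[of _ "1 / (1 - h * r)"]) (simp add: \<open>\<tau> = r * \<mu>\<close> sgn_mult mult.commute)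
qed

theorem theoremA1:
  fixes M :: "'w measure"
    and T n :: nat
    and Y :: "nat \<Rightarrow> nat \<Rightarrow> bool \<Rightarrow> enat \<Rightarrow> 'w \<Rightarrow> real"
    and E :: "nat \<Rightarrow> 'w \<Rightarrow> enat"
    and A :: "nat \<Rightarrow> nat \<Rightarrow> 'w \<Rightarrow> bool"
    and g :: "real \<Rightarrow> real"
    and \<pi> :: "nat \<Rightarrow> nat \<Rightarrow> real"
    and i e s t :: nat
  assumes M: "prob_space M"
    (* random variables *)
    and Y_meas: "\<And>i t a e. i \<in> {1..n} \<Longrightarrow> t \<in> {1..T} \<Longrightarrow> e \<in> Edom T \<Longrightarrow>
                   Y i t a e \<in> borel_measurable M"
    and E_meas: "\<And>i. i \<in> {1..n} \<Longrightarrow> E i \<in> measurable M (count_space UNIV)"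
    and A_meas: "\<And>i t. i \<in> {1..n} \<Longrightarrow> t \<in> {1..T} \<Longrightarrow> A i t \<in> measurable M (count_space UNIV)"
    and E_range: "\<And>i \<omega>. i \<in> {1..n} \<Longrightarrow> \<omega> \<in> space M \<Longrightarrow> E i \<omega> \<in> Edom T"
    (* staggered adoption / anticipation only before treatment *)
    and no_ant: "\<And>i t e \<omega>. i \<in> {1..n} \<Longrightarrow> t \<in> {1..T} \<Longrightarrow> e \<in> Edom T \<Longrightarrow> \<omega> \<in> space M \<Longrightarrow>
                   (enat t \<ge> e \<or> e = \<infinity>) \<Longrightarrow> Y i t True e \<omega> = Y i t False e \<omega>"
    (* g known measurable with finite expectations *)
    and g_meas: "g \<in> borel_measurable borel"
    and g_int: "\<And>i t a e. i \<in> {1..n} \<Longrightarrow> t \<in> {1..T} \<Longrightarrow> e \<in> Edom T \<Longrightarrow>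
                   integrable M (\<lambda>\<omega>. g (Y i t a e \<omega>))"
    and g_int_obs: "\<And>i t. i \<in> {1..n} \<Longrightarrow> t \<in> {1..T} \<Longrightarrow>
                   integrable M (\<lambda>\<omega>. g (obsY Y E A i t \<omega>))"
    (* (i) i.i.d. across units *)
    and iid_indep: "prob_space.indep_vars M (\<lambda>_. unit_space T) (unit_data T Y E A) {1..n}"
    and iid_ident: "\<And>i j. i \<in> {1..n} \<Longrightarrow> j \<in> {1..n} \<Longrightarrow>
                   distr M (unit_space T) (unit_data T Y E A i) = distr M (unit_space T) (unit_data T Y E A j)"
    (* (ii) *)
    and no_ant_before: "\<And>i t e e' \<omega>. i \<in> {1..n} \<Longrightarrow> t \<in> {1..T} \<Longrightarrow> e \<in> Edom T \<Longrightarrow> e' \<in> Edom T \<Longrightarrow>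
                   \<omega> \<in> space M \<Longrightarrow> enat t < min e e' \<Longrightarrow> Y i t False e \<omega> = Y i t False e' \<omega>"
    (* (iii) parallel trends *)
    and par_trends: "\<And>i t1 t2 e. i \<in> {1..n} \<Longrightarrow> t1 \<in> {1..T} \<Longrightarrow> t2 \<in> {1..T} \<Longrightarrow> t1 \<noteq> t2 \<Longrightarrow>
                   e \<in> Edom T \<Longrightarrow>
                   cexp M (\<lambda>\<omega>. g (Y i t1 False \<infinity> \<omega>) - g (Y i t2 False \<infinity> \<omega>)) (evE M E i e)
                 = cexp M (\<lambda>\<omega>. g (Y i t1 False \<infinity> \<omega>) - g (Y i t2 False \<infinity> \<omega>)) (evE M E i \<infinity>)"
    (* fixed unit, dates and periods *)
    and i: "i \<in> {1..n}"
    and e: "e \<in> {1..T}"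
    and t: "t \<in> {1..T}" "e \<le> t"
    and s: "s \<in> {1..T}" "s < e"
    and pi_bd: "0 < \<pi> e s" "\<pi> e s < 1"
    (* (iv) *)
    and iv: "0 \<le> h_ant M E A i (enat e) s" "h_ant M E A i (enat e) s \<le> \<pi> e s"
    (* (v) *)
    and v: "\<bar>tau_g M g Y E A i (enat e) s\<bar> \<le> \<bar>mu_g M g Y E i (enat e) t\<bar>"
  shows "\<exists>c. min 1 (1 / (1 - sgn (tau_g M g Y E A i (enat e) s * mu_g M g Y E i (enat e) t) * \<pi> e s)) \<le> c
           \<and> c \<le> max 1 (1 / (1 - sgn (tau_g M g Y E A i (enat e) s * mu_g M g Y E i (enat e) t) * \<pi> e s))
           \<and> mu_g M g Y E i (enat e) t = m_g M g Y E A i (enat e) s t * c"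
proof -
  have eD: "enat e \<in> Edom T" and "\<infinity> \<in> Edom T"
    using e by (auto simp: Edom_def)
  have "m_g M g Y E A i (enat e) s t
      = mu_g M g Y E i (enat e) t - h_ant M E A i (enat e) s * tau_g M g Y E A i (enat e) s"
  proof (rule m_g_eq_mu_g_minus_h_ant_tau_g[where E = E and A = A and i = i, OF M E_meas[OF i] A_meas[OF i s(1)]])
    show "integrable M (\<lambda>\<omega>. g (Y i u a e' \<omega>))" if "u \<in> {s, t}" "e' \<in> {enat e, \<infinity>}" for u a e'
      using that g_int i s(1) t(1) eD \<open>\<infinity> \<in> Edom T\<close> by auto
    show "Y i u a \<infinity> \<omega> = Y i u False \<infinity> \<omega>" if "u \<in> {s, t}" "\<omega> \<in> space M" for u a \<omega>
      using that no_ant[OF i _ \<open>\<infinity> \<in> Edom T\<close>] s(1) t(1) by (cases a) auto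
    show "Y i t a (enat e) \<omega> = Y i t False (enat e) \<omega>" if "\<omega> \<in> space M" for a \<omega>
      using no_ant[OF i t(1) eD that] t(2) by (cases a) auto
    show "Y i s False (enat e) \<omega> = Y i s False \<infinity> \<omega>" if "\<omega> \<in> space M" for \<omega>
      using no_ant_before[OF i s(1) eD \<open>\<infinity> \<in> Edom T\<close> that] s(2) by simp
    show "cexp M (\<lambda>\<omega>. g (Y i t False \<infinity> \<omega>) - g (Y i s False \<infinity> \<omega>)) (evE M E i (enat e))
        = cexp M (\<lambda>\<omega>. g (Y i t False \<infinity> \<omega>) - g (Y i s False \<infinity> \<omega>)) (evE M E i \<infinity>)"
      using par_trends[OF i t(1) s(1) _ eD] s(2) t(2) by simp
  qed
  then show ?thesis
    using exists_scale_between_sgn_bounds[OF iv pi_bd(2) v] by simp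
qed

end
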